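(* Let $((f_t),(g_t),(h_t))$ be a $W_{1,+}$-geodesic on $G$ and $\gamma$ an oriented path. (1) If $\gamma$ is extremal, then $C_\gamma(t)$ is constant in $t$. (2) If $\gamma\in\mathrm{SE}\Gamma_{1,x}$, then $C_\gamma(t)$ is a polynomial in $t$ of degree at most $\sup\{L(\tilde\gamma):\tilde\gamma\in\mathrm{SE}\Gamma_{2,x}\}$. (3) If $\gamma\in\mathrm{SE}\Gamma_{2,x}$, then $C_\gamma(t)$ is a polynomial in $t$ of degree at most $\sup\{L(\tilde\gamma):\tilde\gamma\in\mathrm{SE}\Gamma_{1,x}\}$.
   Context: $G$ is a connected, locally finite graph with graph distance $d$; geodesics are paths of adjacent vertices with $n=d(\gamma(0),\gamma(n))$; $L(\gamma)=n$, $e_0(\gamma)=\gamma(0)$, $e_1(\gamma)=\gamma(n)$. For finitely supported probability distributions $f_0,f_1$: $\Pi_1(f_0,f_1)$ = couplings minimizing $\sum d(x,y)\pi(x,y)$ (minimum $W_1$), $\mathcal{C}(f_0,f_1)=\{(x,y):\pi(x,y)>0$ for some $\pi\in\Pi_1\}$; $W_1$-orientation: adjacent $x,y$ get $x\to y$ iff some geodesic $\gamma$ with $(e_0(\gamma),e_1(\gamma))\in\mathcal{C}(f_0,f_1)$ has $\gamma(k)=x,\gamma(k+1)=y$. Oriented paths have $\gamma(i)\to\gamma(i+1)$, $\gamma_i=\gamma(i)$. $E(G)=\{(xy):x\to y\}$, $T(G)=\{(x_0x_1x_2):x_0\to x_1\to x_2\}$, $\mathcal{F}(x)=\{y:x\to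 y\}$, $\mathcal{E}(x)=\{y:y\to x\}$; $\nabla g(x_1)=\sum_{\mathcal{F}(x_1)}g(x_1x_2)-\sum_{\mathcal{E}(x_1)}g(x_0x_1)$, $\nabla h(x_1x_2)=\sum_{x_3\in\mathcal{F}(x_2)}h(x_1x_2x_3)-\sum_{x_0\in\mathcal{E}(x_1)}h(x_0x_1x_2)$. $W_1$-geodesic: $W_1(f_s,f_t)=|t-s|W_1(f_0,f_1)$. $W_{1,+}$-geodesic: a $W_1$-geodesic from $f_0$ to $f_1$ (graph $W_1$-oriented w.r.t. $(f_0,f_1)$), differentiable in $t$, with $g_t$ on $E(G)$, $h_t$ on $T(G)$ such that $\partial_tf_t=-\nabla g_t$, $\partial_tg_t=-\nabla h_t$, $g_t>0$, $f_t(x_1)h_t(x_0x_1x_2)=g_t(x_0x_1)g_t(x_1x_2)$. $C_\gamma(t)=f_t(\gamma_0)$ if $L(\gamma)=0$, $g_t(\gamma_0\gamma_1)$ if $L(\gamma)=1$, $\prod_{i=0}^{n-1}g_t(\gamma_i\gamma_{i+1})/\prod_{j=1}^{n-1}f_t(\gamma_j)$ if $n=L(\gamma)\ge2$. $\mathcal{A}=\{x:\mathcal{E}(x)=\emptyset\}$, $\mathcal{B}=\{x:\mathcal{F}(x)=\emptyset\}$. An oriented path is extremal if $e_0(\gamma)\in\mathcal{A}$ and $e_1(\gamma)\in\mathcal{B}$; $\mathrm{SE}\Gamma_{1,x}$ is the set of oriented paths with $e_0(\gamma)\in\mathcal{A}$, $e_1(\gamma)=x$; $\mathrm{SE}\Gamma_{2,x}$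 the set with $e_0(\gamma)=x$, $e_1(\gamma)\in\mathcal{B}$. *)

theory Defs
  imports Complex_Main "HOL-Computational_Algebra.Polynomial" "HOL-Library.Extended_Nat"
begin

text \<open>Graphs: vertex type 'v, adjacency relation adj. Paths are nonempty vertex lists;
  the path gamma has gamma(i) = gamma ! i and length L(gamma) = length gamma - 1.\<close>

definition plen :: "'v list \<Rightarrow> nat" where
  "plen \<gamma> = length \<gamma> - 1"

definition conn_lf_graph :: "('v \<Rightarrow> 'v \<Rightarrow> bool) \<Rightarrow> bool" where
  "conn_lf_graph adj \<longleftrightarrow>
     (\<forall>x y. adj x y \<longrightarrow> adj y x) \<and> (\<forall>x. \<not> adj x x) \<and>
     (\<forall>x. finite {y. adj x y}) \<and>
     (\<forall>x y. \<exists>\<gamma>. \<gamma> \<noteq> [] \<and> hd \<gamma> = x \<and> last \<gamma> = y \<and>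
               (\<forall>i. i + 1 < length \<gamma> \<longrightarrow> adj (\<gamma> ! i) (\<gamma> ! (i + 1))))"

definition walk :: "('v \<Rightarrow> 'v \<Rightarrow> bool) \<Rightarrow> 'v list \<Rightarrow> bool" where
  "walk adj \<gamma> \<longleftrightarrow> \<gamma> \<noteq> [] \<and> (\<forall>i. i + 1 < length \<gamma> \<longrightarrow> adj (\<gamma> ! i) (\<gamma> ! (i + 1)))"

definition gdist :: "('v \<Rightarrow> 'v \<Rightarrow> bool) \<Rightarrow> 'v \<Rightarrow> 'v \<Rightarrow> nat" where
  "gdist adj x y = (LEAST n. \<exists>\<gamma>. walk adj \<gamma> \<and> hd \<gamma> = x \<and> last \<gamma> = y \<and> plen \<gamma> = n)"

definition geodesic :: "('v \<Rightarrow> 'v \<Rightarrow> bool) \<Rightarrow> 'v list \<Rightarrow> bool" where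
  "geodesic adj \<gamma> \<longleftrightarrow> walk adj \<gamma> \<and> plen \<gamma> = gdist adj (hd \<gamma>) (last \<gamma>)"

definition fin_prob :: "('v \<Rightarrow> real) \<Rightarrow> bool" where
  "fin_prob f \<longleftrightarrow> finite {x. f x \<noteq> 0} \<and> (\<forall>x. f x \<ge> 0) \<and> (\<Sum>x\<in>{x. f x \<noteq> 0}. f x) = 1"

definition coupling :: "('v \<Rightarrow> real) \<Rightarrow> ('v \<Rightarrow> real) \<Rightarrow> ('v \<times> 'v \<Rightarrow> real) \<Rightarrow> bool" where
  "coupling f0 f1 \<pi> \<longleftrightarrow> finite {p. \<pi> p \<noteq> 0} \<and> (\<forall>p. \<pi> p \<ge> 0) \<and>
     (\<forall>x. f0 x = (\<Sum>p\<in>{p. \<pi> p \<noteq> 0 \<and> fst p = x}. \<pi> p)) \<and>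
     (\<forall>y. f1 y = (\<Sum>p\<in>{p. \<pi> p \<noteq> 0 \<and> snd p = y}. \<pi> p))"

definition tcost :: "('v \<Rightarrow> 'v \<Rightarrow> bool) \<Rightarrow> ('v \<times> 'v \<Rightarrow> real) \<Rightarrow> real" where
  "tcost adj \<pi> = (\<Sum>p\<in>{p. \<pi> p \<noteq> 0}. real (gdist adj (fst p) (snd p)) * \<pi> p)"

definition W1 :: "('v \<Rightarrow> 'v \<Rightarrow> bool) \<Rightarrow> ('v \<Rightarrow> real) \<Rightarrow> ('v \<Rightarrow> real) \<Rightarrow> real" where
  "W1 adj f0 f1 = Inf {tcost adj \<pi> | \<pi>. coupling f0 f1 \<pi>}"

definition Pi1 :: "('v \<Rightarrow> 'v \<Rightarrow> bool) \<Rightarrow> ('v \<Rightarrow> real) \<Rightarrow> ('v \<Rightarrow> real) \<Rightarrow> ('v \<times> 'v \<Rightarrow> real) set" where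
  "Pi1 adj f0 f1 = {\<pi>. coupling f0 f1 \<pi> \<and> tcost adj \<pi> = W1 adj f0 f1}"

definition Cset :: "('v \<Rightarrow> 'v \<Rightarrow> bool) \<Rightarrow> ('v \<Rightarrow> real) \<Rightarrow> ('v \<Rightarrow> real) \<Rightarrow> ('v \<times> 'v) set" where
  "Cset adj f0 f1 = {(x, y). \<exists>\<pi>\<in>Pi1 adj f0 f1. \<pi> (x, y) > 0}"

definition W1_orient :: "('v \<Rightarrow> 'v \<Rightarrow> bool) \<Rightarrow> ('v \<Rightarrow> real) \<Rightarrow> ('v \<Rightarrow> real) \<Rightarrow> 'v \<Rightarrow> 'v \<Rightarrow> bool" where
  "W1_orient adj f0 f1 x y \<longleftrightarrow> adj x y \<and>
     (\<exists>\<gamma> k. geodesic adj \<gamma> \<and> (hd \<gamma>, last \<gamma>) \<in> Cset adj f0 f1 \<and>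
            k + 1 < length \<gamma> \<and> \<gamma> ! k = x \<and> \<gamma> ! (k + 1) = y)"

definition Fwd :: "('v \<Rightarrow> 'v \<Rightarrow> bool) \<Rightarrow> 'v \<Rightarrow> 'v set" where
  "Fwd arr x = {y. arr x y}"

definition Bwd :: "('v \<Rightarrow> 'v \<Rightarrow> bool) \<Rightarrow> 'v \<Rightarrow> 'v set" where
  "Bwd arr x = {y. arr y x}"

definition Aset :: "('v \<Rightarrow> 'v \<Rightarrow> bool) \<Rightarrow> 'v set" where
  "Aset arr = {x. Bwd arr x = {}}"

definition Bset :: "('v \<Rightarrow> 'v \<Rightarrow> bool) \<Rightarrow> 'v set" where
  "Bset arr = {x. Fwd arr x = {}}"

definition oriented_path :: "('v \<Rightarrow> 'v \<Rightarrow> bool) \<Rightarrow> 'v list \<Rightarrow> bool" where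
  "oriented_path arr \<gamma> \<longleftrightarrow> \<gamma> \<noteq> [] \<and> (\<forall>i. i + 1 < length \<gamma> \<longrightarrow> arr (\<gamma> ! i) (\<gamma> ! (i + 1)))"

definition extremal :: "('v \<Rightarrow> 'v \<Rightarrow> bool) \<Rightarrow> 'v list \<Rightarrow> bool" where
  "extremal arr \<gamma> \<longleftrightarrow> oriented_path arr \<gamma> \<and> hd \<gamma> \<in> Aset arr \<and> last \<gamma> \<in> Bset arr"

definition SEG1 :: "('v \<Rightarrow> 'v \<Rightarrow> bool) \<Rightarrow> 'v \<Rightarrow> 'v list set" where
  "SEG1 arr x = {\<gamma>. oriented_path arr \<gamma> \<and> hd \<gamma> \<in> Aset arr \<and> last \<gamma> = x}"

definition SEG2 :: "('v \<Rightarrow> 'v \<Rightarrow> bool) \<Rightarrow> 'v \<Rightarrow> 'v list set" where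
  "SEG2 arr x = {\<gamma>. oriented_path arr \<gamma> \<and> hd \<gamma> = x \<and> last \<gamma> \<in> Bset arr}"

definition div_v :: "('v \<Rightarrow> 'v \<Rightarrow> bool) \<Rightarrow> ('v \<Rightarrow> 'v \<Rightarrow> real) \<Rightarrow> 'v \<Rightarrow> real" where
  "div_v arr g x1 = (\<Sum>x2\<in>Fwd arr x1. g x1 x2) - (\<Sum>x0\<in>Bwd arr x1. g x0 x1)"

definition div_e :: "('v \<Rightarrow> 'v \<Rightarrow> bool) \<Rightarrow> ('v \<Rightarrow> 'v \<Rightarrow> 'v \<Rightarrow> real) \<Rightarrow> 'v \<Rightarrow> 'v \<Rightarrow> real" where
  "div_e arr h x1 x2 = (\<Sum>x3\<in>Fwd arr x2. h x1 x2 x3) - (\<Sum>x0\<in>Bwd arr x1. h x0 x1 x2)"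

definition W1plus_geodesic ::
  "('v \<Rightarrow> 'v \<Rightarrow> bool) \<Rightarrow> (real \<Rightarrow> 'v \<Rightarrow> real) \<Rightarrow> (real \<Rightarrow> 'v \<Rightarrow> 'v \<Rightarrow> real)
     \<Rightarrow> (real \<Rightarrow> 'v \<Rightarrow> 'v \<Rightarrow> 'v \<Rightarrow> real) \<Rightarrow> bool" where
  "W1plus_geodesic adj f g h \<longleftrightarrow>
     (\<forall>t\<in>{0..1}. fin_prob (f t)) \<and>
     (\<forall>s\<in>{0..1}. \<forall>t\<in>{0..1}. W1 adj (f s) (f t) = \<bar>t - s\<bar> * W1 adj (f 0) (f 1)) \<and>
     (\<forall>x. \<forall>t\<in>{0..1}. (\<lambda>\<tau>. f \<tau> x) differentiable (at t within {0..1})) \<and>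
     (\<forall>t\<in>{0<..<1}. \<forall>x.
        ((\<lambda>\<tau>. f \<tau> x) has_real_derivative - div_v (W1_orient adj (f 0) (f 1)) (g t) x) (at t)) \<and>
     (\<forall>t\<in>{0<..<1}. \<forall>x y. W1_orient adj (f 0) (f 1) x y \<longrightarrow>
        ((\<lambda>\<tau>. g \<tau> x y) has_real_derivative - div_e (W1_orient adj (f 0) (f 1)) (h t) x y) (at t)) \<and>
     (\<forall>t\<in>{0<..<1}. \<forall>x y. W1_orient adj (f 0) (f 1) x y \<longrightarrow> g t x y > 0) \<and>
     (\<forall>t\<in>{0<..<1}. \<forall>x0 x1 x2. W1_orient adj (f 0) (f 1) x0 x1 \<and> W1_orient adj (f 0) (f 1) x1 x2
        \<longrightarrow> f t x1 * h t x0 x1 x2 = g t x0 x1 * g t x1 x2)"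

definition Cpath :: "(real \<Rightarrow> 'v \<Rightarrow> real) \<Rightarrow> (real \<Rightarrow> 'v \<Rightarrow> 'v \<Rightarrow> real) \<Rightarrow> 'v list \<Rightarrow> real \<Rightarrow> real" where
  "Cpath f g \<gamma> t =
     (if plen \<gamma> = 0 then f t (\<gamma> ! 0)
      else if plen \<gamma> = 1 then g t (\<gamma> ! 0) (\<gamma> ! 1)
      else (\<Prod>i<plen \<gamma>. g t (\<gamma> ! i) (\<gamma> ! (i + 1))) / (\<Prod>j\<in>{1..plen \<gamma> - 1}. f t (\<gamma> ! j)))"

end

theory Submission
  imports Defs
begin

text \<open>Along a \<open>W\<^sub>1\<^sub>,\<^sub>+\<close>-geodesic the logarithmic derivative of \<open>C\<^sub>\<gamma>\<close> telescopes
  along the path, which gives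
  \<open>C\<^sub>\<gamma>' = (\<Sum>w \<rightarrow> \<gamma>\<^sub>0. C\<^bsub>w\<gamma>\<^esub>) - (\<Sum>\<gamma>\<^sub>n \<rightarrow> y. C\<^bsub>\<gamma>y\<^esub>)\<close>.
  For an extremal path both sums are empty, so \<open>C\<^sub>\<gamma>\<close> is constant. If \<open>\<gamma>\<close> starts in \<open>\<A>\<close>,
  only the second sum survives and expresses \<open>C\<^sub>\<gamma>'\<close> through paths one edge longer. Cyclical
  monotonicity of optimal couplings bounds the length of oriented paths, so induction on the
  height of the end point (the length of the longest oriented path leaving it) shows that
  \<open>C\<^sub>\<gamma>\<close> is a polynomial of at most that degree; paths ending in \<open>\<B>\<close> are treated
  symmetrically with the depth of the starting point.\<close>

section \<open>Polynomials from derivatives\<close>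

definition poly_antideriv :: "'a::field_char_0 poly \<Rightarrow> 'a poly" where
  "poly_antideriv q = (\<Sum>i\<le>degree q. monom (coeff q i / of_nat (Suc i)) (Suc i))"

lemma pderiv_poly_antideriv: "pderiv (poly_antideriv q) = q"
proof -
  have "pderiv (poly_antideriv q) = (\<Sum>i\<le>degree q. monom (coeff q i) i)"
    unfolding poly_antideriv_def higher_pderiv_sum[where n = 1, simplified] pderiv_monom
    by (intro sum.cong) (simp_all del: of_nat_Suc)
  also have "\<dots> = q" by (rule poly_as_sum_of_monoms)
  finally show ?thesis .
qed

lemma degree_poly_antideriv_le:
  assumes "\<And>i. n \<le> i \<Longrightarrow> coeff q i = 0"
  shows "degree (poly_antideriv q) \<le> n"
  unfolding poly_antideriv_def
proof (rule degree_sum_le)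
  fix i assume "i \<in> {..degree q}"
  show "degree (monom (coeff q i / of_nat (Suc i)) (Suc i)) \<le> n"
    using assms[of i] by (cases "n \<le> i") (auto intro: order.trans[OF degree_monom_le])
qed simp

lemma poly_if_derivative_poly:
  fixes F :: "real \<Rightarrow> real"
  assumes "a < b"
    and deriv: "\<And>t. t \<in> {a<..<b} \<Longrightarrow> (F has_real_derivative poly q t) (at t)"
    and "\<And>i. n \<le> i \<Longrightarrow> coeff q i = 0"
  shows "\<exists>p. (\<forall>t\<in>{a<..<b}. F t = poly p t) \<and> degree p \<le> n"
proof -
  define m where "m = (a + b) / 2"
  have m: "m \<in> {a<..<b}" using \<open>a < b\<close> by (simp add: m_def)
  define G where "G t = F t - poly (poly_antideriv q) t" for t
  have "(G has_real_derivative 0) (at t)" if "t \<in> {a<..<b}" for t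
  proof -
    have "(G has_real_derivative poly q t - poly (pderiv (poly_antideriv q)) t) (at t)"
      unfolding G_def by (intro DERIV_diff deriv that poly_DERIV)
    then show ?thesis by (simp add: pderiv_poly_antideriv)
  qed
  then have "G t = G m" if "t \<in> {a<..<b}" for t
    using DERIV_isconst3[OF \<open>a < b\<close> that m] by blast
  then have "\<forall>t\<in>{a<..<b}. F t = poly (poly_antideriv q + [:G m:]) t"
    unfolding G_def by (simp add: algebra_simps)
  moreover have "degree (poly_antideriv q + [:G m:]) \<le> n"
    using degree_poly_antideriv_le[of n q, OF assms(3)]
    by (metis degree_add_le degree_pCons_0 le0 le_zero_eq)
  ultimately show ?thesis by blast
qed

lemma poly_if_derivative_recursive:
  fixes F :: "'a \<Rightarrow> real \<Rightarrow> real" and rank :: "'a \<Rightarrow> nat"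
    and S :: "'a \<Rightarrow> 'b set" and step :: "'a \<Rightarrow> 'b \<Rightarrow> 'a"
  assumes "a < b"
    and descends: "\<And>x y. x \<in> P \<Longrightarrow> y \<in> S x \<Longrightarrow> step x y \<in> P \<and> rank (step x y) < rank x"
    and deriv: "\<And>x t. x \<in> P \<Longrightarrow> t \<in> {a<..<b} \<Longrightarrow>
                 (F x has_real_derivative c * (\<Sum>y\<in>S x. F (step x y) t)) (at t)"
    and "x \<in> P"
  shows "\<exists>p. (\<forall>t\<in>{a<..<b}. F x t = poly p t) \<and> degree p \<le> rank x"
  using \<open>x \<in> P\<close>
proof (induction "rank x" arbitrary: x rule: less_induct)
  case less
  have "\<forall>y\<in>S x. \<exists>p. (\<forall>t\<in>{a<..<b}. F (step x y) t = poly p t) \<and> degree p < rank x"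
    using less descends by (meson order.strict_trans1)
  then obtain p where p: "\<And>y. y \<in> S x \<Longrightarrow>
      (\<forall>t\<in>{a<..<b}. F (step x y) t = poly (p y) t) \<and> degree (p y) < rank x"
    by metis
  define q where "q = smult c (\<Sum>y\<in>S x. p y)"
  show ?case
  proof (rule poly_if_derivative_poly[OF \<open>a < b\<close>])
    fix t assume t: "t \<in> {a<..<b}"
    have "c * (\<Sum>y\<in>S x. F (step x y) t) = poly q t"
      using p t by (simp add: q_def poly_sum)
    then show "(F x has_real_derivative poly q t) (at t)"
      using deriv[OF less.prems t] by simp
  next
    fix i assume "rank x \<le> i"
    then have "coeff (p y) i = 0" if "y \<in> S x" for y
      using p[OF that] by (simp add: coeff_eq_0)
    then show "coeff q i = 0" by (simp add: q_def coeff_sum)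
  qed
qed

section \<open>Cyclical monotonicity of optimal couplings\<close>

lemma sum_support_superset:
  assumes "finite S" "{p. \<pi> p \<noteq> 0} \<subseteq> S"
  shows "(\<Sum>p\<in>{p. \<pi> p \<noteq> 0 \<and> Q p}. \<pi> p) = (\<Sum>p\<in>{p\<in>S. Q p}. \<pi> p)"
  by (rule sum.mono_neutral_left) (use assms in auto)

lemma coupling_iff_finite_superset:
  assumes "finite S" "{p. \<pi> p \<noteq> 0} \<subseteq> S"
  shows "coupling \<mu> \<nu> \<pi> \<longleftrightarrow> (\<forall>p. 0 \<le> \<pi> p) \<and>
           (\<forall>x. \<mu> x = (\<Sum>p\<in>{p\<in>S. fst p = x}. \<pi> p)) \<and> (\<forall>y. \<nu> y = (\<Sum>p\<in>{p\<in>S. snd p = y}. \<pi> p))"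
  using finite_subset[OF assms(2,1)] sum_support_superset[OF assms]
  by (simp add: coupling_def)

lemma coupling_nonneg: "coupling \<mu> \<nu> \<pi> \<Longrightarrow> 0 \<le> \<pi> p"
  unfolding coupling_def by blast

lemma tcost_finite_superset:
  assumes "finite S" "{p. \<pi> p \<noteq> 0} \<subseteq> S"
  shows "tcost adj \<pi> = (\<Sum>p\<in>S. real (gdist adj (fst p) (snd p)) * \<pi> p)"
  unfolding tcost_def by (rule sum.mono_neutral_left) (use assms in auto)

lemma tcost_nonneg: "coupling \<mu> \<nu> \<pi> \<Longrightarrow> 0 \<le> tcost adj \<pi>"
  unfolding tcost_def coupling_def by (auto intro: sum_nonneg)

lemma W1_le_tcost: "coupling \<mu> \<nu> \<pi> \<Longrightarrow> W1 adj \<mu> \<nu> \<le> tcost adj \<pi>"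
  unfolding W1_def by (rule cInf_lower) (auto intro: tcost_nonneg simp: bdd_below_def)

lemma Pi1_midpoint:
  assumes "\<pi>\<^sub>1 \<in> Pi1 adj \<mu> \<nu>" "\<pi>\<^sub>2 \<in> Pi1 adj \<mu> \<nu>"
  shows "(\<lambda>p. (\<pi>\<^sub>1 p + \<pi>\<^sub>2 p) / 2) \<in> Pi1 adj \<mu> \<nu>"
proof -
  define S where "S = {p. \<pi>\<^sub>1 p \<noteq> 0} \<union> {p. \<pi>\<^sub>2 p \<noteq> 0}"
  have c: "coupling \<mu> \<nu> \<pi>\<^sub>1" "coupling \<mu> \<nu> \<pi>\<^sub>2"
    and cost: "tcost adj \<pi>\<^sub>1 = W1 adj \<mu> \<nu>" "tcost adj \<pi>\<^sub>2 = W1 adj \<mu> \<nu>"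
    using assms by (auto simp: Pi1_def)
  have S: "finite S" "{p. \<pi>\<^sub>1 p \<noteq> 0} \<subseteq> S" "{p. \<pi>\<^sub>2 p \<noteq> 0} \<subseteq> S"
    "{p. (\<pi>\<^sub>1 p + \<pi>\<^sub>2 p) / 2 \<noteq> 0} \<subseteq> S"
    using c by (auto simp: S_def coupling_def)
  note c' = c[unfolded coupling_iff_finite_superset[OF S(1,2)] coupling_iff_finite_superset[OF S(1,3)]]
  have "coupling \<mu> \<nu> (\<lambda>p. (\<pi>\<^sub>1 p + \<pi>\<^sub>2 p) / 2)"
    unfolding coupling_iff_finite_superset[OF S(1,4)]
    using c' by (simp add: sum.distrib flip: sum_divide_distrib)
  moreover have "tcost adj (\<lambda>p. (\<pi>\<^sub>1 p + \<pi>\<^sub>2 p) / 2) = W1 adj \<mu> \<nu>"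
    using cost unfolding tcost_finite_superset[OF S(1,4)] tcost_finite_superset[OF S(1,2)]
      tcost_finite_superset[OF S(1,3)]
    by (simp add: distrib_left sum.distrib flip: sum_divide_distrib)
  ultimately show ?thesis by (simp add: Pi1_def)
qed

lemma Pi1_positive_on_finite_subset_Cset:
  assumes "finite T" "T \<noteq> {}" "T \<subseteq> Cset adj \<mu> \<nu>"
  shows "\<exists>\<sigma>\<in>Pi1 adj \<mu> \<nu>. \<forall>q\<in>T. 0 < \<sigma> q"
  using assms
proof (induction T rule: finite_ne_induct)
  case (singleton q)
  then show ?case by (cases q) (auto simp: Cset_def)
next
  case (insert q T)
  obtain \<sigma> where \<sigma>: "\<sigma> \<in> Pi1 adj \<mu> \<nu>" "\<forall>q\<in>T. 0 < \<sigma> q" using insert by blast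
  obtain \<pi> where \<pi>: "\<pi> \<in> Pi1 adj \<mu> \<nu>" "0 < \<pi> q" using insert.prems by (cases q) (auto simp: Cset_def)
  have nonneg: "0 \<le> \<sigma> p" "0 \<le> \<pi> p" for p
    using \<sigma>(1) \<pi>(1) by (auto simp: Pi1_def intro: coupling_nonneg)
  have "\<forall>q'\<in>insert q T. 0 < (\<pi> q' + \<sigma> q') / 2"
    using \<sigma>(2) \<pi>(2) add_pos_nonneg[OF _ nonneg(1)] add_nonneg_pos[OF nonneg(2)] by auto
  with Pi1_midpoint[OF \<pi>(1) \<sigma>(1)] show ?case by (intro bexI[of _ "\<lambda>p. (\<pi> p + \<sigma> p) / 2"])
qed

definition occurrences :: "(nat \<Rightarrow> 'a) \<Rightarrow> nat \<Rightarrow> 'a \<Rightarrow> real" where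
  "occurrences c k p = (\<Sum>i<k. of_bool (p = c i))"

lemma sum_weighted_occurrences:
  assumes "finite S" "\<And>i. i < k \<Longrightarrow> c i \<in> S"
  shows "(\<Sum>p\<in>{p\<in>S. Q p}. G p * occurrences c k p) = (\<Sum>i<k. of_bool (Q (c i)) * G (c i))"
proof -
  have "(\<Sum>p\<in>{p\<in>S. Q p}. G p * occurrences c k p) =
        (\<Sum>i<k. \<Sum>p\<in>{p\<in>S. Q p}. if p = c i then G p else 0)"
    unfolding occurrences_def sum_distrib_left by (subst sum.swap) (auto intro!: sum.cong)
  also have "\<dots> = (\<Sum>i<k. of_bool (Q (c i)) * G (c i))"
    by (rule sum.cong) (use assms in \<open>auto simp: sum.delta'\<close>)
  finally show ?thesis .
qed

lemma sum_lessThan_cyclic_shift: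
  fixes F :: "nat \<Rightarrow> 'a::comm_monoid_add"
  assumes "F k = F 0"
  shows "(\<Sum>i<k. F (Suc i)) = (\<Sum>i<k. F i)"
proof (cases k)
  case (Suc k')
  have "(\<Sum>i<Suc k'. F (Suc i)) = (\<Sum>i<k'. F (Suc i)) + F (Suc k')" by (rule sum.lessThan_Suc)
  moreover have "(\<Sum>i<Suc k'. F i) = F 0 + (\<Sum>i<k'. F (Suc i))" by (rule sum.lessThan_Suc_shift)
  ultimately show ?thesis using assms Suc by (simp add: add.commute)
qed simp

lemma coupling_cyclic_perturbation:
  fixes a b :: "nat \<Rightarrow> 'v" and \<sigma> :: "'v \<times> 'v \<Rightarrow> real" and \<epsilon> :: real and k :: nat
  defines "\<pi> \<equiv> \<lambda>p. \<sigma> p + \<epsilon> * (occurrences (\<lambda>i. (a (Suc i), b i)) k p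
                                   - occurrences (\<lambda>i. (a i, b i)) k p)"
  assumes \<sigma>: "coupling \<mu> \<nu> \<sigma>" and cycle: "a k = a 0" and "0 \<le> \<epsilon>"
    and small: "\<And>p. \<epsilon> * occurrences (\<lambda>i. (a i, b i)) k p \<le> \<sigma> p"
  shows "coupling \<mu> \<nu> \<pi>"
    and "tcost adj \<pi> = tcost adj \<sigma> + \<epsilon> * ((\<Sum>i<k. real (gdist adj (a (Suc i)) (b i)))
                                         - (\<Sum>i<k. real (gdist adj (a i) (b i))))"
proof -
  define S where "S = {p. \<sigma> p \<noteq> 0} \<union> (\<lambda>i. (a i, b i)) ` {..<k} \<union> (\<lambda>i. (a (Suc i), b i)) ` {..<k}"
  have S: "finite S" "{p. \<sigma> p \<noteq> 0} \<subseteq> S"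
    using \<sigma> by (auto simp: S_def coupling_def)
  have "occurrences c k p = 0" if "p \<notin> c ` {..<k}" for c :: "nat \<Rightarrow> 'v \<times> 'v" and p
    using that by (auto simp: occurrences_def intro!: sum.neutral)
  then have supp: "{p. \<pi> p \<noteq> 0} \<subseteq> S"
    by (auto simp: \<pi>_def S_def)
  have in_S: "(a i, b i) \<in> S" "(a (Suc i), b i) \<in> S" if "i < k" for i
    using that by (auto simp: S_def)
  note occ = sum_weighted_occurrences[OF S(1), where G = "\<lambda>_. 1", simplified]
    sum_weighted_occurrences[OF S(1), where Q = "\<lambda>_. True", simplified]
  note sums = sum.distrib sum_subtractf sum_distrib_left[symmetric]
  have "\<forall>p. 0 \<le> \<pi> p"
    using small \<open>0 \<le> \<epsilon>\<close> by (auto simp: \<pi>_def occurrences_def algebra_simps intro!: add_increasing2 sum_nonneg)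
  moreover have "\<mu> x = (\<Sum>p\<in>{p\<in>S. fst p = x}. \<pi> p)" for x
  proof -
    have "(\<Sum>i<k. of_bool (a (Suc i) = x) :: real) = (\<Sum>i<k. of_bool (a i = x))"
      by (rule sum_lessThan_cyclic_shift) (simp add: cycle)
    then show ?thesis
      using \<sigma>[unfolded coupling_iff_finite_superset[OF S]]
      by (simp add: \<pi>_def sums occ in_S)
  qed
  moreover have "\<nu> y = (\<Sum>p\<in>{p\<in>S. snd p = y}. \<pi> p)" for y
    using \<sigma>[unfolded coupling_iff_finite_superset[OF S]]
    by (simp add: \<pi>_def sums occ in_S)
  ultimately show "coupling \<mu> \<nu> \<pi>"
    unfolding coupling_iff_finite_superset[OF S(1) supp] by blast
  show "tcost adj \<pi> = tcost adj \<sigma> + \<epsilon> * ((\<Sum>i<k. real (gdist adj (a (Suc i)) (b i)))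
                                         - (\<Sum>i<k. real (gdist adj (a i) (b i))))"
    unfolding tcost_finite_superset[OF S] tcost_finite_superset[OF S(1) supp]
    by (simp add: \<pi>_def sums occ in_S algebra_simps)
qed

text \<open>Moving a little mass of an optimal coupling from the pairs \<open>(a i, b i)\<close> to the pairs
  \<open>(a (Suc i), b i)\<close> preserves the marginals, so it cannot decrease the cost.\<close>

lemma Cset_cyclically_monotone:
  assumes C: "\<And>i. i < k \<Longrightarrow> (a i, b i) \<in> Cset adj \<mu> \<nu>" and cycle: "a k = a 0"
  shows "(\<Sum>i<k. real (gdist adj (a i) (b i))) \<le> (\<Sum>i<k. real (gdist adj (a (Suc i)) (b i)))"
proof (cases "k = 0")
  case False
  define T where "T = (\<lambda>i. (a i, b i)) ` {..<k}"
  have "finite T" "T \<noteq> {}" "T \<subseteq> Cset adj \<mu> \<nu>" using C \<open>k \<noteq> 0\<close> by (auto simp: T_def)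
  then obtain \<sigma> where \<sigma>: "\<sigma> \<in> Pi1 adj \<mu> \<nu>" "\<forall>q\<in>T. 0 < \<sigma> q"
    using Pi1_positive_on_finite_subset_Cset by blast
  have coupling: "coupling \<mu> \<nu> \<sigma>" and optimal: "tcost adj \<sigma> = W1 adj \<mu> \<nu>"
    using \<sigma>(1) by (auto simp: Pi1_def)
  define \<epsilon> where "\<epsilon> = Min (\<sigma> ` T) / k"
  have "0 < Min (\<sigma> ` T)" using \<open>finite T\<close> \<open>T \<noteq> {}\<close> \<sigma>(2) by (subst Min_gr_iff) auto
  then have "0 < \<epsilon>" using \<open>k \<noteq> 0\<close> by (simp add: \<epsilon>_def)
  have "\<epsilon> * occurrences (\<lambda>i. (a i, b i)) k p \<le> \<sigma> p" for p
  proof (cases "p \<in> T")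
    case True
    have "occurrences (\<lambda>i. (a i, b i)) k p \<le> k"
      using sum_mono[of "{..<k}" "\<lambda>i. of_bool (p = (a i, b i)) :: real" "\<lambda>_. 1"]
      by (simp add: occurrences_def)
    then have "\<epsilon> * occurrences (\<lambda>i. (a i, b i)) k p \<le> Min (\<sigma> ` T)"
      using \<open>0 < \<epsilon>\<close> \<open>k \<noteq> 0\<close> by (simp add: \<epsilon>_def field_simps mult_left_mono)
    also have "\<dots> \<le> \<sigma> p" using True by (simp add: T_def)
    finally show ?thesis .
  next
    case False
    then have "occurrences (\<lambda>i. (a i, b i)) k p = 0"
      by (auto simp: occurrences_def T_def intro!: sum.neutral)
    then show ?thesis using coupling_nonneg[OF coupling] by simp
  qed
  note perturbed = coupling_cyclic_perturbation[OF coupling cycle less_imp_le[OF \<open>0 < \<epsilon>\<close>] this]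
  have "W1 adj \<mu> \<nu> \<le> W1 adj \<mu> \<nu> + \<epsilon> * ((\<Sum>i<k. real (gdist adj (a (Suc i)) (b i)))
                                      - (\<Sum>i<k. real (gdist adj (a i) (b i))))"
    using W1_le_tcost[OF perturbed(1), of adj] perturbed(2)[of adj] optimal by simp
  then show ?thesis using \<open>0 < \<epsilon>\<close> by (simp add: zero_le_mult_iff)
qed simp

section \<open>Oriented paths of the \<open>W\<^sub>1\<close>-orientation have bounded length\<close>

lemma walk_take:
  assumes "walk adj \<Gamma>" "m < length \<Gamma>"
  shows "walk adj (take (Suc m) \<Gamma>) \<and> hd (take (Suc m) \<Gamma>) = hd \<Gamma> \<and>
         last (take (Suc m) \<Gamma>) = \<Gamma> ! m \<and> plen (take (Suc m) \<Gamma>) = m"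
proof -
  have "length (take (Suc m) \<Gamma>) = Suc m" using assms(2) by simp
  then show ?thesis using assms by (auto simp: walk_def plen_def hd_conv_nth last_conv_nth)
qed

lemma walk_drop:
  assumes "walk adj \<Gamma>" "j < length \<Gamma>"
  shows "walk adj (drop j \<Gamma>) \<and> hd (drop j \<Gamma>) = \<Gamma> ! j \<and> last (drop j \<Gamma>) = last \<Gamma> \<and>
         plen (drop j \<Gamma>) = plen \<Gamma> - j"
  using assms by (auto simp: walk_def plen_def hd_drop_conv_nth last_drop add.assoc[symmetric])

lemma walk_append_tl:
  assumes "walk adj xs" "walk adj ys" "last xs = hd ys"
  shows "walk adj (xs @ tl ys) \<and> hd (xs @ tl ys) = hd xs \<and> last (xs @ tl ys) = last ys \<and>
         plen (xs @ tl ys) = plen xs + plen ys"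
proof -
  have xne: "xs \<noteq> []" and yne: "ys \<noteq> []" using assms by (auto simp: walk_def)
  have ax: "\<And>i. i + 1 < length xs \<Longrightarrow> adj (xs ! i) (xs ! (i + 1))"
   and ay: "\<And>i. i + 1 < length ys \<Longrightarrow> adj (ys ! i) (ys ! (i + 1))"
    using assms by (auto simp: walk_def)
  have joint: "xs ! (length xs - 1) = ys ! 0"
    using assms(3) xne yne by (simp add: last_conv_nth hd_conv_nth)
  have "adj ((xs @ tl ys) ! i) ((xs @ tl ys) ! (i + 1))" if "i + 1 < length (xs @ tl ys)" for i
  proof -
    consider "i + 1 < length xs" | "i + 1 = length xs" | "length xs \<le> i" by linarith
    then show ?thesis
    proof cases
      case 1
      then show ?thesis using ax by (simp add: nth_append)
    next
      case 2
      then show ?thesis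
        using that joint ay[of 0] by (simp add: nth_append nth_tl 2[symmetric])
    next
      case 3
      then have "Suc i - length xs = Suc (i - length xs)" by simp
      with 3 that show ?thesis
        using ay[of "Suc (i - length xs)"] by (simp add: nth_append nth_tl)
    qed
  qed
  moreover have "last (xs @ tl ys) = last ys"
    using assms(3) yne by (cases ys) auto
  ultimately show ?thesis
    using xne yne by (auto simp: walk_def plen_def Suc_le_eq)
qed

lemma gdist_le_plen: "walk adj \<gamma> \<Longrightarrow> gdist adj (hd \<gamma>) (last \<gamma>) \<le> plen \<gamma>"
  unfolding gdist_def by (rule Least_le) blast

lemma gdist_splice:
  assumes "walk adj \<Gamma>" "walk adj \<Gamma>'" "Suc k < length \<Gamma>" "m < length \<Gamma>'" "\<Gamma>' ! m = \<Gamma> ! Suc k"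
  shows "gdist adj (hd \<Gamma>') (last \<Gamma>) \<le> m + (plen \<Gamma> - Suc k)"
proof -
  let ?w = "take (Suc m) \<Gamma>' @ tl (drop (Suc k) \<Gamma>)"
  have "walk adj ?w \<and> hd ?w = hd \<Gamma>' \<and> last ?w = last \<Gamma> \<and> plen ?w = m + (plen \<Gamma> - Suc k)"
    using walk_append_tl walk_take[OF assms(2,4)] walk_drop[OF assms(1,3)] assms(5) by metis
  then show ?thesis using gdist_le_plen[of adj ?w] by simp
qed

text \<open>Closing the geodesics \<open>\<Gamma> j, \<dots>, \<Gamma> l\<close> into a cycle of transport pairs, cyclical
  monotonicity compares their lengths with the walks obtained by splicing \<open>\<Gamma> (Suc i)\<close> into
  \<open>\<Gamma> i\<close> at the shared vertex \<open>x (Suc i)\<close>; this telescopes to the bound on the positions.\<close>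

lemma transport_edge_positions_increase:
  assumes H: "\<And>i. i < n \<Longrightarrow> geodesic adj (\<Gamma> i) \<and> (hd (\<Gamma> i), last (\<Gamma> i)) \<in> Cset adj \<mu> \<nu> \<and>
                 Suc (K i) < length (\<Gamma> i) \<and> \<Gamma> i ! K i = x i \<and> \<Gamma> i ! Suc (K i) = x (Suc i)"
    and "j < l" "l < n" and same_start: "hd (\<Gamma> j) = hd (\<Gamma> l)"
  shows "K j + (l - j) \<le> K l"
proof -
  define c where "c = l - j"
  have l: "l = j + c" using \<open>j < l\<close> by (simp add: c_def)
  have H': "geodesic adj (\<Gamma> (j + i)) \<and> (hd (\<Gamma> (j + i)), last (\<Gamma> (j + i))) \<in> Cset adj \<mu> \<nu> \<and>
      Suc (K (j + i)) < length (\<Gamma> (j + i)) \<and> \<Gamma> (j + i) ! K (j + i) = x (j + i) \<and>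
      \<Gamma> (j + i) ! Suc (K (j + i)) = x (Suc (j + i))" if "i \<le> c" for i
    using H that \<open>l < n\<close> l by simp
  define len where "len i = real (plen (\<Gamma> (j + i)))" for i
  define pos where "pos i = real (K (j + i))" for i
  have "(\<Sum>i<c. len i) = (\<Sum>i<c. real (gdist adj (hd (\<Gamma> (j + i))) (last (\<Gamma> (j + i)))))"
    using H' by (intro sum.cong) (auto simp: len_def geodesic_def)
  also have "\<dots> \<le> (\<Sum>i<c. real (gdist adj (hd (\<Gamma> (j + Suc i))) (last (\<Gamma> (j + i)))))"
    by (rule Cset_cyclically_monotone[where a = "\<lambda>i. hd (\<Gamma> (j + i))" and \<mu> = \<mu> and \<nu> = \<nu>])
       (use H' same_start l in auto)
  also have "\<dots> \<le> (\<Sum>i<c. pos (Suc i) + len i - pos i - 1)"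
  proof (rule sum_mono)
    fix i assume "i \<in> {..<c}"
    then have Hi: "geodesic adj (\<Gamma> (j + i)) \<and> Suc (K (j + i)) < length (\<Gamma> (j + i)) \<and>
                   \<Gamma> (j + i) ! Suc (K (j + i)) = x (Suc (j + i))"
      and Hs: "geodesic adj (\<Gamma> (j + Suc i)) \<and> Suc (K (j + Suc i)) < length (\<Gamma> (j + Suc i)) \<and>
                   \<Gamma> (j + Suc i) ! K (j + Suc i) = x (j + Suc i)"
      using H'[of i] H'[of "Suc i"] by auto
    have "gdist adj (hd (\<Gamma> (j + Suc i))) (last (\<Gamma> (j + i)))
          \<le> K (j + Suc i) + (plen (\<Gamma> (j + i)) - Suc (K (j + i)))"
      by (rule gdist_splice) (use Hi Hs in \<open>auto simp: geodesic_def\<close>)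
    moreover have "Suc (K (j + i)) \<le> plen (\<Gamma> (j + i))"
      using Hi unfolding plen_def by (elim conjE) linarith
    ultimately show "real (gdist adj (hd (\<Gamma> (j + Suc i))) (last (\<Gamma> (j + i))))
                     \<le> pos (Suc i) + len i - pos i - 1"
      by (simp add: pos_def len_def of_nat_diff)
  qed
  also have "\<dots> = pos c - pos 0 + (\<Sum>i<c. len i) - c"
    using sum_lessThan_telescope[of pos c] by (simp add: sum.distrib sum_subtractf)
  finally have "pos 0 + c \<le> pos c" by simp
  then show ?thesis by (simp add: pos_def l)
qed

lemma finite_Cset:
  assumes "fin_prob \<mu>" "fin_prob \<nu>"
  shows "finite (Cset adj \<mu> \<nu>)"
proof -
  have "Cset adj \<mu> \<nu> \<subseteq> {x. \<mu> x \<noteq> 0} \<times> {y. \<nu> y \<noteq> 0}"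
  proof safe
    fix x y assume "(x, y) \<in> Cset adj \<mu> \<nu>"
    then obtain \<pi> where \<pi>: "coupling \<mu> \<nu> \<pi>" "0 < \<pi> (x, y)" by (auto simp: Cset_def Pi1_def)
    have fin: "finite {p. \<pi> p \<noteq> 0}" using \<pi>(1) by (simp add: coupling_def)
    have "\<pi> (x, y) \<le> (\<Sum>p\<in>{p. \<pi> p \<noteq> 0 \<and> fst p = x}. \<pi> p)" "\<pi> (x, y) \<le> (\<Sum>p\<in>{p. \<pi> p \<noteq> 0 \<and> snd p = y}. \<pi> p)"
      by (rule member_le_sum; use \<pi> fin coupling_nonneg[OF \<pi>(1)] in auto)+
    then show "\<mu> x = 0 \<Longrightarrow> False" "\<nu> y = 0 \<Longrightarrow> False"
      using \<pi> by (auto simp: coupling_def)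
  qed
  then show ?thesis by (rule finite_subset) (use assms in \<open>simp add: fin_prob_def\<close>)
qed

text \<open>Each oriented edge lies on a transport geodesic; the edges using a fixed transport pair sit
  at strictly increasing positions on geodesics of bounded length, so an oriented path uses each
  of the finitely many pairs boundedly often.\<close>

lemma W1_orient_paths_bounded:
  assumes "fin_prob \<mu>" "fin_prob \<nu>"
  shows "\<exists>B. \<forall>\<gamma>. oriented_path (W1_orient adj \<mu> \<nu>) \<gamma> \<longrightarrow> plen \<gamma> \<le> B"
proof -
  let ?CS = "Cset adj \<mu> \<nu>"
  define D where "D = Max ((\<lambda>q. gdist adj (fst q) (snd q)) ` ?CS)"
  have fin: "finite ?CS" using finite_Cset[OF assms] .
  have "plen \<gamma> \<le> card ?CS * D" if op: "oriented_path (W1_orient adj \<mu> \<nu>) \<gamma>" for \<gamma>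
  proof -
    define n where "n = plen \<gamma>"
    have "\<forall>i<n. \<exists>G k. geodesic adj G \<and> (hd G, last G) \<in> ?CS \<and> Suc k < length G \<and>
                      G ! k = \<gamma> ! i \<and> G ! Suc k = \<gamma> ! Suc i"
      using op by (auto simp: oriented_path_def W1_orient_def n_def plen_def)
    then obtain \<Gamma> K where H: "\<And>i. i < n \<Longrightarrow> geodesic adj (\<Gamma> i) \<and> (hd (\<Gamma> i), last (\<Gamma> i)) \<in> ?CS \<and>
        Suc (K i) < length (\<Gamma> i) \<and> \<Gamma> i ! K i = \<gamma> ! i \<and> \<Gamma> i ! Suc (K i) = \<gamma> ! Suc i"
      by metis
    define I where "I q = {i. i < n \<and> (hd (\<Gamma> i), last (\<Gamma> i)) = q}" for q
    have card_I: "card (I q) \<le> card {..<D}" if "q \<in> ?CS" for q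
    proof (rule card_inj_on_le)
      show "inj_on K (I q)"
      proof (rule strict_mono_on_imp_inj_on, rule strict_mono_onI)
        fix i l assume "i \<in> I q" "l \<in> I q" "i < l"
        then have "K i + (l - i) \<le> K l"
          by (intro transport_edge_positions_increase[of n adj \<Gamma> \<mu> \<nu> K "\<lambda>i. \<gamma> ! i"] H)
             (auto simp: I_def)
        then show "K i < K l" using \<open>i < l\<close> by simp
      qed
      have "K i < D" if "i \<in> I q" for i
      proof -
        have "K i < plen (\<Gamma> i)" and "plen (\<Gamma> i) = gdist adj (fst q) (snd q)"
          using H[of i] that by (auto simp: I_def plen_def geodesic_def)
        moreover have "gdist adj (fst q) (snd q) \<le> D"
          unfolding D_def using \<open>q \<in> ?CS\<close> fin by simp
        ultimately show ?thesis by simp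
      qed
      then show "K ` I q \<subseteq> {..<D}" by auto
    qed simp
    have "{..<n} \<subseteq> (\<Union>q\<in>?CS. I q)" using H by (auto simp: I_def)
    then have "n \<le> card (\<Union>q\<in>?CS. I q)"
      using card_mono[of "\<Union>q\<in>?CS. I q" "{..<n}"] fin by (auto simp: I_def)
    also have "\<dots> \<le> (\<Sum>q\<in>?CS. card (I q))" by (rule card_UN_le[OF fin])
    also have "\<dots> \<le> (\<Sum>q\<in>?CS. D)" by (rule sum_mono) (use card_I in simp)
    finally have "n \<le> (\<Sum>q\<in>?CS. D)" .
    then show ?thesis by (simp add: n_def)
  qed
  then show ?thesis by blast
qed

section \<open>The path quantity \<open>C\<^sub>\<gamma>\<close>\<close>

lemma DERIV_divide_logarithmic:
  fixes P Q :: "real \<Rightarrow> real"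
  assumes "(P has_real_derivative P t * A) (at t)" "(Q has_real_derivative Q t * B) (at t)" "Q t \<noteq> 0"
  shows "((\<lambda>\<tau>. P \<tau> / Q \<tau>) has_real_derivative (P t / Q t) * (A - B)) (at t)"
proof -
  have "((\<lambda>\<tau>. P \<tau> / Q \<tau>) has_real_derivative (P t * A * Q t - P t * (Q t * B)) / (Q t * Q t)) (at t)"
    by (rule DERIV_divide[OF assms])
  moreover have "(P t * A * Q t - P t * (Q t * B)) / (Q t * Q t) = (P t / Q t) * (A - B)"
    using assms(3) by (simp add: field_simps)
  ultimately show ?thesis by simp
qed

lemma oriented_path_nonempty: "oriented_path arr \<gamma> \<Longrightarrow> \<gamma> \<noteq> []"
  by (simp add: oriented_path_def)

lemma oriented_path_singleton: "oriented_path arr [x]"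
  by (simp add: oriented_path_def)

lemma oriented_path_Cons: "oriented_path arr \<gamma> \<Longrightarrow> arr x (hd \<gamma>) \<Longrightarrow> oriented_path arr (x # \<gamma>)"
  unfolding oriented_path_def by (auto simp: nth_Cons hd_conv_nth split: nat.splits)

lemma oriented_path_snoc: "oriented_path arr \<gamma> \<Longrightarrow> arr (last \<gamma>) z \<Longrightarrow> oriented_path arr (\<gamma> @ [z])"
  unfolding oriented_path_def
proof (intro conjI allI impI)
  fix i assume a: "\<gamma> \<noteq> [] \<and> (\<forall>i. i + 1 < length \<gamma> \<longrightarrow> arr (\<gamma> ! i) (\<gamma> ! (i + 1)))"
    "arr (last \<gamma>) z" "i + 1 < length (\<gamma> @ [z])"
  show "arr ((\<gamma> @ [z]) ! i) ((\<gamma> @ [z]) ! (i + 1))"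
  proof (cases "i + 1 < length \<gamma>")
    case True
    then show ?thesis using a by (simp add: nth_append)
  next
    case False
    then have "i = length \<gamma> - 1" using a by simp
    then show ?thesis using a by (simp add: nth_append last_conv_nth)
  qed
qed simp

lemma plen_Cons: "\<gamma> \<noteq> [] \<Longrightarrow> plen (w # \<gamma>) = Suc (plen \<gamma>)"
  by (simp add: plen_def)

lemma plen_snoc: "\<gamma> \<noteq> [] \<Longrightarrow> plen (\<gamma> @ [y]) = Suc (plen \<gamma>)"
  by (simp add: plen_def)

definition edge_prod :: "(real \<Rightarrow> 'v \<Rightarrow> 'v \<Rightarrow> real) \<Rightarrow> 'v list \<Rightarrow> real \<Rightarrow> real" where
  "edge_prod g \<gamma> t = (\<Prod>i<plen \<gamma>. g t (\<gamma> ! i) (\<gamma> ! (i + 1)))"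

definition interior_prod :: "(real \<Rightarrow> 'v \<Rightarrow> real) \<Rightarrow> 'v list \<Rightarrow> real \<Rightarrow> real" where
  "interior_prod f \<gamma> t = (\<Prod>j<plen \<gamma> - 1. f t (\<gamma> ! Suc j))"

lemma Cpath_eq_quotient: "1 \<le> plen \<gamma> \<Longrightarrow> Cpath f g \<gamma> t = edge_prod g \<gamma> t / interior_prod f \<gamma> t"
  by (cases "plen \<gamma> = 1")
     (auto simp: Cpath_def edge_prod_def interior_prod_def prod.atLeast1_atMost_eq)

lemma edge_prod_Cons: "\<gamma> \<noteq> [] \<Longrightarrow> edge_prod g (w # \<gamma>) t = g t w (hd \<gamma>) * edge_prod g \<gamma> t"
  unfolding edge_prod_def plen_Cons prod.lessThan_Suc_shift by (simp add: hd_conv_nth)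

lemma interior_prod_Cons:
  assumes "1 \<le> plen \<gamma>"
  shows "interior_prod f (w # \<gamma>) t = f t (hd \<gamma>) * interior_prod f \<gamma> t"
proof -
  obtain m where m: "plen \<gamma> = Suc m" using assms by (cases "plen \<gamma>") auto
  then have ne: "\<gamma> \<noteq> []" by (auto simp: plen_def)
  have "interior_prod f (w # \<gamma>) t = (\<Prod>j<Suc m. f t (\<gamma> ! j))"
    by (simp add: interior_prod_def plen_Cons[OF ne] m)
  also have "\<dots> = f t (\<gamma> ! 0) * (\<Prod>j<m. f t (\<gamma> ! Suc j))"
    by (rule prod.lessThan_Suc_shift)
  finally show ?thesis by (simp add: interior_prod_def m hd_conv_nth ne)
qed

lemma edge_prod_snoc:
  assumes "\<gamma> \<noteq> []"
  shows "edge_prod g (\<gamma> @ [y]) t = edge_prod g \<gamma> t * g t (last \<gamma>) y"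
proof -
  have L: "length \<gamma> = Suc (plen \<gamma>)" using assms by (simp add: plen_def)
  have "edge_prod g (\<gamma> @ [y]) t = (\<Prod>i<plen \<gamma>. g t ((\<gamma>@[y]) ! i) ((\<gamma>@[y]) ! (i + 1))) *
          g t ((\<gamma>@[y]) ! plen \<gamma>) ((\<gamma>@[y]) ! Suc (plen \<gamma>))"
    by (simp add: edge_prod_def plen_snoc[OF assms])
  also have "(\<Prod>i<plen \<gamma>. g t ((\<gamma>@[y]) ! i) ((\<gamma>@[y]) ! (i + 1))) = edge_prod g \<gamma> t"
    unfolding edge_prod_def by (rule prod.cong) (auto simp: nth_append L)
  finally show ?thesis using assms L by (simp add: nth_append last_conv_nth)
qed

lemma interior_prod_snoc:
  assumes "1 \<le> plen \<gamma>"
  shows "interior_prod f (\<gamma> @ [y]) t = interior_prod f \<gamma> t * f t (last \<gamma>)"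
proof -
  obtain m where m: "plen \<gamma> = Suc m" using assms by (cases "plen \<gamma>") auto
  then have ne: "\<gamma> \<noteq> []" and L: "length \<gamma> = Suc (Suc m)" by (auto simp: plen_def)
  have "interior_prod f (\<gamma> @ [y]) t = (\<Prod>j<Suc m. f t (\<gamma> ! Suc j))"
    unfolding interior_prod_def plen_snoc[OF ne] m by (rule prod.cong) (auto simp: nth_append L)
  then show ?thesis using ne L by (simp add: interior_prod_def m last_conv_nth)
qed

lemma Cpath_Cons:
  assumes "1 \<le> plen \<gamma>"
  shows "Cpath f g (w # \<gamma>) t = Cpath f g \<gamma> t * (g t w (hd \<gamma>) / f t (hd \<gamma>))"
proof -
  have ne: "\<gamma> \<noteq> []" using assms by (auto simp: plen_def)
  then have "1 \<le> plen (w # \<gamma>)" by (simp add: plen_Cons)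
  then show ?thesis
    using assms by (simp add: Cpath_eq_quotient edge_prod_Cons[OF ne] interior_prod_Cons mult_ac)
qed

lemma Cpath_snoc:
  assumes "1 \<le> plen \<gamma>"
  shows "Cpath f g (\<gamma> @ [y]) t = Cpath f g \<gamma> t * (g t (last \<gamma>) y / f t (last \<gamma>))"
proof -
  have ne: "\<gamma> \<noteq> []" using assms by (auto simp: plen_def)
  then have "1 \<le> plen (\<gamma> @ [y])" by (simp add: plen_snoc)
  then show ?thesis
    using assms by (simp add: Cpath_eq_quotient edge_prod_snoc[OF ne] interior_prod_snoc mult_ac)
qed

section \<open>Heights and depths\<close>

locale bounded_orientation =
  fixes arr :: "'v \<Rightarrow> 'v \<Rightarrow> bool"
  assumes oriented_paths_bounded: "\<exists>B. \<forall>\<gamma>. oriented_path arr \<gamma> \<longrightarrow> plen \<gamma> \<le> B"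
begin

definition height :: "'v \<Rightarrow> nat" where
  "height x = Max {plen \<gamma> | \<gamma>. oriented_path arr \<gamma> \<and> hd \<gamma> = x}"

definition depth :: "'v \<Rightarrow> nat" where
  "depth x = Max {plen \<gamma> | \<gamma>. oriented_path arr \<gamma> \<and> last \<gamma> = x}"

lemma finite_oriented_path_lengths: "finite {plen \<gamma> | \<gamma>. oriented_path arr \<gamma> \<and> P \<gamma>}"
proof -
  obtain B where "\<And>\<gamma>. oriented_path arr \<gamma> \<Longrightarrow> plen \<gamma> \<le> B" using oriented_paths_bounded by blast
  then have "{plen \<gamma> | \<gamma>. oriented_path arr \<gamma> \<and> P \<gamma>} \<subseteq> {..B}" by auto
  then show ?thesis by (rule finite_subset) simp
qed

lemma height_attained: "\<exists>\<gamma>. oriented_path arr \<gamma> \<and> hd \<gamma> = x \<and> plen \<gamma> = height x"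
proof -
  have "[x] \<in> {\<gamma>. oriented_path arr \<gamma> \<and> hd \<gamma> = x}" by (simp add: oriented_path_singleton)
  then have "{plen \<gamma> | \<gamma>. oriented_path arr \<gamma> \<and> hd \<gamma> = x} \<noteq> {}" by blast
  from Max_in[OF finite_oriented_path_lengths this] show ?thesis unfolding height_def by auto
qed

lemma height_ge: "oriented_path arr \<gamma> \<Longrightarrow> hd \<gamma> = x \<Longrightarrow> plen \<gamma> \<le> height x"
  unfolding height_def by (rule Max_ge[OF finite_oriented_path_lengths]) blast

lemma depth_attained: "\<exists>\<gamma>. oriented_path arr \<gamma> \<and> last \<gamma> = x \<and> plen \<gamma> = depth x"
proof -
  have "[x] \<in> {\<gamma>. oriented_path arr \<gamma> \<and> last \<gamma> = x}" by (simp add: oriented_path_singleton)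
  then have "{plen \<gamma> | \<gamma>. oriented_path arr \<gamma> \<and> last \<gamma> = x} \<noteq> {}" by blast
  from Max_in[OF finite_oriented_path_lengths this] show ?thesis unfolding depth_def by auto
qed

lemma depth_ge: "oriented_path arr \<gamma> \<Longrightarrow> last \<gamma> = x \<Longrightarrow> plen \<gamma> \<le> depth x"
  unfolding depth_def by (rule Max_ge[OF finite_oriented_path_lengths]) blast

lemma height_decreasing:
  assumes "arr x y"
  shows "height y < height x"
proof -
  obtain \<gamma> where \<gamma>: "oriented_path arr \<gamma>" "hd \<gamma> = y" "plen \<gamma> = height y"
    using height_attained by blast
  then have "plen (x # \<gamma>) \<le> height x"
    using height_ge oriented_path_Cons assms by fastforce
  then show ?thesis using \<gamma> by (simp add: plen_Cons oriented_path_nonempty)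
qed

lemma depth_increasing:
  assumes "arr w x"
  shows "depth w < depth x"
proof -
  obtain \<gamma> where \<gamma>: "oriented_path arr \<gamma>" "last \<gamma> = w" "plen \<gamma> = depth w"
    using depth_attained by blast
  then have "plen (\<gamma> @ [x]) \<le> depth x"
    using depth_ge oriented_path_snoc assms by fastforce
  then show ?thesis using \<gamma> by (simp add: plen_snoc oriented_path_nonempty)
qed

lemma height_le_SUP_SEG2: "enat (height x) \<le> (SUP \<gamma>\<in>SEG2 arr x. enat (plen \<gamma>))"
proof -
  obtain \<gamma> where \<gamma>: "oriented_path arr \<gamma>" "hd \<gamma> = x" "plen \<gamma> = height x"
    using height_attained by blast
  have "last \<gamma> \<in> Bset arr"
  proof (rule ccontr)
    assume "last \<gamma> \<notin> Bset arr"
    then obtain z where "arr (last \<gamma>) z" by (auto simp: Bset_def Fwd_def)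
    then have "plen (\<gamma> @ [z]) \<le> height x"
      using height_ge oriented_path_snoc \<gamma> by (metis hd_append oriented_path_nonempty)
    then show False using \<gamma> by (simp add: plen_snoc oriented_path_nonempty)
  qed
  then have "\<gamma> \<in> SEG2 arr x" using \<gamma> by (simp add: SEG2_def)
  then show ?thesis using \<gamma>(3) by (metis SUP_upper)
qed

lemma depth_le_SUP_SEG1: "enat (depth x) \<le> (SUP \<gamma>\<in>SEG1 arr x. enat (plen \<gamma>))"
proof -
  obtain \<gamma> where \<gamma>: "oriented_path arr \<gamma>" "last \<gamma> = x" "plen \<gamma> = depth x"
    using depth_attained by blast
  have "hd \<gamma> \<in> Aset arr"
  proof (rule ccontr)
    assume "hd \<gamma> \<notin> Aset arr"
    then obtain w where "arr w (hd \<gamma>)" by (auto simp: Aset_def Bwd_def)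
    then have "plen (w # \<gamma>) \<le> depth x"
      using depth_ge oriented_path_Cons \<gamma> by (metis last_ConsR oriented_path_nonempty)
    then show False using \<gamma> by (simp add: plen_Cons oriented_path_nonempty)
  qed
  then have "\<gamma> \<in> SEG1 arr x" using \<gamma> by (simp add: SEG1_def)
  then show ?thesis using \<gamma>(3) by (metis SUP_upper)
qed

end

section \<open>\<open>W\<^sub>1\<^sub>,\<^sub>+\<close>-geodesics\<close>

locale W1plus_geodesic_curve =
  fixes adj :: "'v \<Rightarrow> 'v \<Rightarrow> bool"
    and f :: "real \<Rightarrow> 'v \<Rightarrow> real"
    and g :: "real \<Rightarrow> 'v \<Rightarrow> 'v \<Rightarrow> real"
    and h :: "real \<Rightarrow> 'v \<Rightarrow> 'v \<Rightarrow> 'v \<Rightarrow> real"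
  assumes geodesic: "W1plus_geodesic adj f g h"
begin

abbreviation arr :: "'v \<Rightarrow> 'v \<Rightarrow> bool" where
  "arr \<equiv> W1_orient adj (f 0) (f 1)"

sublocale bounded_orientation arr
  by unfold_locales (rule W1_orient_paths_bounded; use geodesic in \<open>simp add: W1plus_geodesic_def\<close>)

definition inflow :: "real \<Rightarrow> 'v \<Rightarrow> real" where
  "inflow t x = (\<Sum>w\<in>Bwd arr x. g t w x)"

definition outflow :: "real \<Rightarrow> 'v \<Rightarrow> real" where
  "outflow t x = (\<Sum>y\<in>Fwd arr x. g t x y)"

lemma g_pos: "t \<in> {0<..<1} \<Longrightarrow> arr x y \<Longrightarrow> 0 < g t x y"
  using geodesic by (simp add: W1plus_geodesic_def)

lemma f_nonzero_at_inner_vertex: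
  assumes "t \<in> {0<..<1}" "arr w x" "arr x y"
  shows "f t x \<noteq> 0"
proof
  assume "f t x = 0"
  moreover have "f t x * h t w x y = g t w x * g t x y"
    using geodesic assms by (simp add: W1plus_geodesic_def)
  ultimately show False using g_pos assms by (metis mult_pos_pos mult_zero_left less_irrefl)
qed

lemma h_eq_quotient:
  assumes "t \<in> {0<..<1}" "arr w x" "arr x y"
  shows "h t w x y = g t w x * g t x y / f t x"
proof -
  have "f t x * h t w x y = g t w x * g t x y"
    using geodesic assms by (simp add: W1plus_geodesic_def)
  then show ?thesis using f_nonzero_at_inner_vertex[OF assms] by (simp add: field_simps)
qed

lemma f_derivative:
  "t \<in> {0<..<1} \<Longrightarrow> ((\<lambda>\<tau>. f \<tau> x) has_real_derivative inflow t x - outflow t x) (at t)"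
  using geodesic by (simp add: W1plus_geodesic_def div_v_def inflow_def outflow_def)

lemma g_derivative:
  assumes "t \<in> {0<..<1}" "arr x y"
  shows "((\<lambda>\<tau>. g \<tau> x y) has_real_derivative
           g t x y * (inflow t x / f t x - outflow t y / f t y)) (at t)"
proof -
  have d: "((\<lambda>\<tau>. g \<tau> x y) has_real_derivative - div_e arr (h t) x y) (at t)"
    using geodesic assms by (simp add: W1plus_geodesic_def)
  have "(\<Sum>z\<in>Fwd arr y. h t x y z) = g t x y * (outflow t y / f t y)"
    unfolding outflow_def sum_divide_distrib sum_distrib_left
    by (rule sum.cong) (auto simp: Fwd_def h_eq_quotient[OF assms])
  moreover have "(\<Sum>w\<in>Bwd arr x. h t w x y) = g t x y * (inflow t x / f t x)"
    unfolding inflow_def sum_divide_distrib sum_distrib_left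
    by (rule sum.cong) (auto simp: Bwd_def h_eq_quotient[OF assms(1) _ assms(2)])
  ultimately show ?thesis using d unfolding div_e_def by (simp add: algebra_simps)
qed

text \<open>The contributions of the interior vertices to the logarithmic derivative cancel.\<close>

lemma Cpath_logarithmic_derivative:
  assumes op: "oriented_path arr \<gamma>" and "1 \<le> plen \<gamma>" and t: "t \<in> {0<..<1}"
  shows "(Cpath f g \<gamma> has_real_derivative Cpath f g \<gamma> t *
           (inflow t (hd \<gamma>) / f t (hd \<gamma>) - outflow t (last \<gamma>) / f t (last \<gamma>))) (at t)"
proof -
  obtain m where m: "plen \<gamma> = Suc m" using \<open>1 \<le> plen \<gamma>\<close> by (cases "plen \<gamma>") auto
  have ne: "\<gamma> \<noteq> []" and L: "length \<gamma> = Suc (Suc m)" using op m by (auto simp: oriented_path_def plen_def)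
  have ar: "arr (\<gamma> ! i) (\<gamma> ! Suc i)" if "i \<le> m" for i
    using op that L by (simp add: oriented_path_def)
  define a where "a i = inflow t (\<gamma> ! i) / f t (\<gamma> ! i)" for i
  define b where "b i = outflow t (\<gamma> ! i) / f t (\<gamma> ! i)" for i
  have g_nz: "g t (\<gamma> ! i) (\<gamma> ! Suc i) \<noteq> 0" if "i \<le> m" for i
    using g_pos[OF t ar[OF that]] by simp
  have f_nz: "f t (\<gamma> ! Suc j) \<noteq> 0" if "j < m" for j
    using f_nonzero_at_inner_vertex[OF t ar ar] that by simp
  have "((\<lambda>\<tau>. \<Prod>i<Suc m. g \<tau> (\<gamma> ! i) (\<gamma> ! Suc i)) has_real_derivative
          (\<Prod>i<Suc m. g t (\<gamma> ! i) (\<gamma> ! Suc i)) *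
          (\<Sum>i<Suc m. g t (\<gamma> ! i) (\<gamma> ! Suc i) * (a i - b (Suc i)) / g t (\<gamma> ! i) (\<gamma> ! Suc i))) (at t)"
    using g_derivative[OF t ar] g_nz
    by (intro has_field_derivative_prod') (auto simp: a_def b_def less_Suc_eq_le)
  also have "(\<Sum>i<Suc m. g t (\<gamma> ! i) (\<gamma> ! Suc i) * (a i - b (Suc i)) / g t (\<gamma> ! i) (\<gamma> ! Suc i))
           = (\<Sum>i<Suc m. a i - b (Suc i))"
    using g_nz by (intro sum.cong) (auto simp: less_Suc_eq_le)
  finally have d_edge: "(edge_prod g \<gamma> has_real_derivative edge_prod g \<gamma> t * (\<Sum>i<Suc m. a i - b (Suc i))) (at t)"
    by (simp add: edge_prod_def[abs_def] m)
  have "((\<lambda>\<tau>. \<Prod>j<m. f \<tau> (\<gamma> ! Suc j)) has_real_derivative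
          (\<Prod>j<m. f t (\<gamma> ! Suc j)) *
          (\<Sum>j<m. (inflow t (\<gamma> ! Suc j) - outflow t (\<gamma> ! Suc j)) / f t (\<gamma> ! Suc j))) (at t)"
    using f_derivative[OF t] f_nz by (intro has_field_derivative_prod') auto
  then have d_interior: "(interior_prod f \<gamma> has_real_derivative
                           interior_prod f \<gamma> t * (\<Sum>j<m. a (Suc j) - b (Suc j))) (at t)"
    by (simp add: interior_prod_def[abs_def] m a_def b_def diff_divide_distrib)
  have "interior_prod f \<gamma> t \<noteq> 0" using f_nz by (simp add: interior_prod_def m)
  note d_quotient = DERIV_divide_logarithmic[OF d_edge d_interior this]
  have "Cpath f g \<gamma> = (\<lambda>\<tau>. edge_prod g \<gamma> \<tau> / interior_prod f \<gamma> \<tau>)"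
    using Cpath_eq_quotient[OF \<open>1 \<le> plen \<gamma>\<close>] by (simp add: fun_eq_iff)
  then have d_Cpath: "(Cpath f g \<gamma> has_real_derivative Cpath f g \<gamma> t *
          ((\<Sum>i<Suc m. a i - b (Suc i)) - (\<Sum>j<m. a (Suc j) - b (Suc j)))) (at t)"
    using d_quotient by simp
  have telescope: "(\<Sum>i<Suc m. a i - b (Suc i)) - (\<Sum>j<m. a (Suc j) - b (Suc j)) = a 0 - b (Suc m)"
    using sum.lessThan_Suc_shift[of a m] sum.lessThan_Suc[of "\<lambda>i. b (Suc i)" m]
    by (simp add: sum_subtractf del: sum.lessThan_Suc)
  have "(Cpath f g \<gamma> has_real_derivative Cpath f g \<gamma> t * (a 0 - b (Suc m))) (at t)"
    using d_Cpath unfolding telescope .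
  then show ?thesis
    using ne L by (simp add: a_def b_def hd_conv_nth last_conv_nth)
qed

lemma Cpath_derivative:
  assumes op: "oriented_path arr \<gamma>" and t: "t \<in> {0<..<1}"
  shows "(Cpath f g \<gamma> has_real_derivative
           (\<Sum>w\<in>Bwd arr (hd \<gamma>). Cpath f g (w # \<gamma>) t)
         - (\<Sum>y\<in>Fwd arr (last \<gamma>). Cpath f g (\<gamma> @ [y]) t)) (at t)"
proof (cases "plen \<gamma> = 0")
  case True
  then obtain x where \<gamma>: "\<gamma> = [x]"
    using op by (cases \<gamma>) (auto simp: plen_def oriented_path_def)
  have "Cpath f g \<gamma> = (\<lambda>\<tau>. f \<tau> x)" by (simp add: \<gamma> Cpath_def plen_def fun_eq_iff)
  then show ?thesis
    using f_derivative[OF t, of x] by (simp add: \<gamma> Cpath_def plen_def inflow_def outflow_def)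
next
  case False
  then have "1 \<le> plen \<gamma>" by simp
  with Cpath_logarithmic_derivative[OF op this t] show ?thesis
    by (simp add: Cpath_Cons Cpath_snoc inflow_def outflow_def sum_distrib_left sum_divide_distrib
                  right_diff_distrib)
qed


lemma Cpath_constant_if_extremal:
  assumes "extremal arr \<gamma>" "s \<in> {0<..<1}" "t \<in> {0<..<1}"
  shows "Cpath f g \<gamma> s = Cpath f g \<gamma> t"
proof -
  have "Bwd arr (hd \<gamma>) = {}" "Fwd arr (last \<gamma>) = {}" "oriented_path arr \<gamma>"
    using assms(1) by (auto simp: extremal_def Aset_def Bset_def)
  then have "(Cpath f g \<gamma> has_real_derivative 0) (at \<tau>)" if "\<tau> \<in> {0<..<1}" for \<tau>
    using Cpath_derivative[OF _ that, of \<gamma>] by simp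
  then show ?thesis by (intro DERIV_isconst3[of 0 1]) (use assms in auto)
qed

lemma Cpath_poly_SEG1:
  assumes "\<gamma> \<in> SEG1 arr x"
  shows "\<exists>p. (\<forall>t\<in>{0<..<1}. Cpath f g \<gamma> t = poly p t) \<and> degree p \<le> height x"
proof -
  let ?P = "{\<gamma>. oriented_path arr \<gamma> \<and> Bwd arr (hd \<gamma>) = {}}"
  have "\<exists>p. (\<forall>t\<in>{0<..<1}. Cpath f g \<gamma> t = poly p t) \<and> degree p \<le> height (last \<gamma>)"
  proof (rule poly_if_derivative_recursive[where P = ?P and S = "\<lambda>\<gamma>. Fwd arr (last \<gamma>)"
        and step = "\<lambda>\<gamma> y. \<gamma> @ [y]" and c = "-1"])
    fix \<gamma> y assume "\<gamma> \<in> ?P" "y \<in> Fwd arr (last \<gamma>)"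
    then show "\<gamma> @ [y] \<in> ?P \<and> height (last (\<gamma> @ [y])) < height (last \<gamma>)"
      by (auto simp: Fwd_def oriented_path_snoc height_decreasing dest: oriented_path_nonempty)
  next
    fix \<gamma> t assume "\<gamma> \<in> ?P" "t \<in> {0<..<1::real}"
    then show "(Cpath f g \<gamma> has_real_derivative -1 * (\<Sum>y\<in>Fwd arr (last \<gamma>). Cpath f g (\<gamma> @ [y]) t)) (at t)"
      using Cpath_derivative[of \<gamma> t] by simp
  qed (use assms in \<open>auto simp: SEG1_def Aset_def\<close>)
  then show ?thesis using assms by (simp add: SEG1_def)
qed

lemma Cpath_poly_SEG2:
  assumes "\<gamma> \<in> SEG2 arr x"
  shows "\<exists>p. (\<forall>t\<in>{0<..<1}. Cpath f g \<gamma> t = poly p t) \<and> degree p \<le> depth x"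
proof -
  let ?P = "{\<gamma>. oriented_path arr \<gamma> \<and> Fwd arr (last \<gamma>) = {}}"
  have "\<exists>p. (\<forall>t\<in>{0<..<1}. Cpath f g \<gamma> t = poly p t) \<and> degree p \<le> depth (hd \<gamma>)"
  proof (rule poly_if_derivative_recursive[where P = ?P and S = "\<lambda>\<gamma>. Bwd arr (hd \<gamma>)"
        and step = "\<lambda>\<gamma> w. w # \<gamma>" and c = 1])
    fix \<gamma> w assume "\<gamma> \<in> ?P" "w \<in> Bwd arr (hd \<gamma>)"
    then show "w # \<gamma> \<in> ?P \<and> depth (hd (w # \<gamma>)) < depth (hd \<gamma>)"
      by (auto simp: Bwd_def oriented_path_Cons depth_increasing dest: oriented_path_nonempty)
  next
    fix \<gamma> t assume "\<gamma> \<in> ?P" "t \<in> {0<..<1::real}"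
    then show "(Cpath f g \<gamma> has_real_derivative 1 * (\<Sum>w\<in>Bwd arr (hd \<gamma>). Cpath f g (w # \<gamma>) t)) (at t)"
      using Cpath_derivative[of \<gamma> t] by simp
  qed (use assms in \<open>auto simp: SEG2_def Bset_def\<close>)
  then show ?thesis using assms by (simp add: SEG2_def)
qed

end

theorem proposition3p4:
  fixes adj :: "'v \<Rightarrow> 'v \<Rightarrow> bool"
    and f :: "real \<Rightarrow> 'v \<Rightarrow> real"
    and g :: "real \<Rightarrow> 'v \<Rightarrow> 'v \<Rightarrow> real"
    and h :: "real \<Rightarrow> 'v \<Rightarrow> 'v \<Rightarrow> 'v \<Rightarrow> real"
  assumes "conn_lf_graph adj"
    and "W1plus_geodesic adj f g h"
  shows "(\<forall>\<gamma>. extremal (W1_orient adj (f 0) (f 1)) \<gamma> \<longrightarrow>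
            (\<forall>s\<in>{0<..<1}. \<forall>t\<in>{0<..<1}. Cpath f g \<gamma> s = Cpath f g \<gamma> t))
       \<and> (\<forall>x \<gamma>. \<gamma> \<in> SEG1 (W1_orient adj (f 0) (f 1)) x \<longrightarrow>
            (\<exists>p :: real poly. (\<forall>t\<in>{0<..<1}. Cpath f g \<gamma> t = poly p t) \<and>
               enat (degree p) \<le> (SUP \<gamma>'\<in>SEG2 (W1_orient adj (f 0) (f 1)) x. enat (plen \<gamma>'))))
       \<and> (\<forall>x \<gamma>. \<gamma> \<in> SEG2 (W1_orient adj (f 0) (f 1)) x \<longrightarrow>
            (\<exists>p :: real poly. (\<forall>t\<in>{0<..<1}. Cpath f g \<gamma> t = poly p t) \<and>
               enat (degree p) \<le> (SUP \<gamma>'\<in>SEG1 (W1_orient adj (f 0) (f 1)) x. enat (plen \<gamma>'))))"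
proof -
  interpret W1plus_geodesic_curve adj f g h
    by unfold_locales (fact assms(2))
  have "enat (degree p) \<le> (SUP \<gamma>'\<in>SEG2 arr x. enat (plen \<gamma>'))" if "degree p \<le> height x"
    for p :: "real poly" and x
    using that height_le_SUP_SEG2[of x] by (metis enat_ord_simps(1) order_trans)
  moreover have "enat (degree p) \<le> (SUP \<gamma>'\<in>SEG1 arr x. enat (plen \<gamma>'))" if "degree p \<le> depth x"
    for p :: "real poly" and x
    using that depth_le_SUP_SEG1[of x] by (metis enat_ord_simps(1) order_trans)
  ultimately show ?thesis
    using Cpath_constant_if_extremal Cpath_poly_SEG1 Cpath_poly_SEG2 by meson
qed

end
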